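(* Let $\mathcal{G}$ be a graph with exactly two zealots, with opinions $-1$ and $1$, such that the persuadable subgraph $\mathcal{G}_{\mathcal{P}}$ is $d$-regular for some $d$ and every persuadable node is adjacent to both zealots. Consider the SBCM with parameters $\gamma,\delta\ge0$ and let $\bar{\mathbf{x}}$ be the harmonic state in which every persuadable node has opinion $0$. Let $u=\omega(0)=\frac{1}{1+e^{-\gamma\delta}}$ and $v=\omega(1)=\frac{1}{1+e^{\gamma-\gamma\delta}}$, and let $\mathbf{L}_{\mathcal{P}}$ be the combinatorial Laplacian of $\mathcal{G}_{\mathcal{P}}$. Then the space of unstable directions at $\bar{\mathbf{x}}$ is spanned by the eigenvectors $\mathbf{v}_i$ of $\mathbf{L}_{\mathcal{P}}$ whose eigenvalues $\lambda_i$ satisfy $$\lambda_i\le-\frac{2v\,(1-2\gamma(1-v))}{u}.$$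
   Context: Let $\mathcal{G}$ be a finite undirected unweighted graph without self-loops, adjacency $i\sim j$, with nodes partitioned into zealots $\mathcal{Z}$ and persuadable nodes $\mathcal{P}$; $\mathcal{G}_{\mathcal{P}}$ is the subgraph induced by $\mathcal{P}$, and its combinatorial Laplacian is $\mathbf{D}-\mathbf{A}$ (degree matrix minus adjacency matrix). With $w(x_i,x_j)=\omega(|x_i-x_j|)=\frac{1}{1+e^{\gamma(x_i-x_j)^2-\gamma\delta}}$ for $i\sim j$ and $0$ otherwise, the SBCM is $\frac{dx_i}{dt}=f_i(\mathbf{x})=\frac{\sum_j w(x_i,x_j)(x_j-x_i)}{\sum_j w(x_i,x_j)}$ for $i\in\mathcal{P}$ and $\frac{dx_i}{dt}=0$ for zealots; $\bar{\mathbf{x}}$ is a steady state. The space of unstable directions at a steady state is the span of the eigenvectors of $\mathbf{J}_{\mathcal{P}}=(\partial f_i/\partial x_j)_{i,j\in\mathcal{P}}$ (evaluated there) with nonnegative eigenvalues. *)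

theory Defs
  imports "HOL-Analysis.Analysis"
begin

text \<open>Z is the set of zealots, the persuadable nodes are the complement of Z.\<close>

definition simple_graph :: "('n \<Rightarrow> 'n \<Rightarrow> bool) \<Rightarrow> bool" where
  "simple_graph adj \<longleftrightarrow> (\<forall>i j. adj i j \<longleftrightarrow> adj j i) \<and> (\<forall>i. \<not> adj i i)"

definition omega :: "real \<Rightarrow> real \<Rightarrow> real \<Rightarrow> real" where
  "omega \<gamma> \<delta> r = 1 / (1 + exp (\<gamma> * r\<^sup>2 - \<gamma> * \<delta>))"

definition sbcm_w :: "('n \<Rightarrow> 'n \<Rightarrow> bool) \<Rightarrow> real \<Rightarrow> real \<Rightarrow> real^'n \<Rightarrow> 'n \<Rightarrow> 'n \<Rightarrow> real" where
  "sbcm_w adj \<gamma> \<delta> x i j = (if adj i j then omega \<gamma> \<delta> \<bar>x$i - x$j\<bar> else 0)"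

definition sbcm_f :: "('n::finite \<Rightarrow> 'n \<Rightarrow> bool) \<Rightarrow> 'n set \<Rightarrow> real \<Rightarrow> real \<Rightarrow> real^'n \<Rightarrow> 'n \<Rightarrow> real" where
  "sbcm_f adj Z \<gamma> \<delta> x i =
     (if i \<in> Z then 0
      else (\<Sum>j\<in>UNIV. sbcm_w adj \<gamma> \<delta> x i j * (x$j - x$i)) / (\<Sum>j\<in>UNIV. sbcm_w adj \<gamma> \<delta> x i j))"

text \<open>Partial derivative d f_i / d x_j at state x (entries of the Jacobian; J_P is its
  restriction to persuadable indices).\<close>
definition sbcm_jac :: "('n::finite \<Rightarrow> 'n \<Rightarrow> bool) \<Rightarrow> 'n set \<Rightarrow> real \<Rightarrow> real \<Rightarrow> real^'n \<Rightarrow> 'n \<Rightarrow> 'n \<Rightarrow> real" where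
  "sbcm_jac adj Z \<gamma> \<delta> x i j = deriv (\<lambda>t. sbcm_f adj Z \<gamma> \<delta> (x + t *\<^sub>R axis j 1) i) 0"

text \<open>v is an eigenvector, with (real) eigenvalue lam, of the matrix (M i j) restricted to
  the index set P; vectors over P are represented as vectors in real^'n vanishing off P.\<close>
definition is_eigvec_on :: "'n set \<Rightarrow> ('n \<Rightarrow> 'n \<Rightarrow> real) \<Rightarrow> real \<Rightarrow> real^'n \<Rightarrow> bool" where
  "is_eigvec_on P M lam v \<longleftrightarrow>
     v \<noteq> 0 \<and> (\<forall>i. i \<notin> P \<longrightarrow> v$i = 0) \<and>
     (\<forall>i\<in>P. (\<Sum>j\<in>P. M i j * v$j) = lam * v$i)"

definition unstable_space :: "('n::finite \<Rightarrow> 'n \<Rightarrow> bool) \<Rightarrow> 'n set \<Rightarrow> real \<Rightarrow> real \<Rightarrow> real^'n \<Rightarrow> (real^'n) set" where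
  "unstable_space adj Z \<gamma> \<delta> x =
     span {v. \<exists>lam. lam \<ge> 0 \<and> is_eigvec_on (- Z) (sbcm_jac adj Z \<gamma> \<delta> x) lam v}"

definition laplacian_on :: "('n \<Rightarrow> 'n \<Rightarrow> bool) \<Rightarrow> 'n set \<Rightarrow> 'n \<Rightarrow> 'n \<Rightarrow> real" where
  "laplacian_on adj P i j =
     (if i = j then real (card {k\<in>P. adj i k}) else if adj i j then -1 else 0)"

end

theory Submission
  imports Defs
begin

text \<open>At the harmonic state every persuadable node i sees its two zealots at distance 1, pulling
  with equal weight v in opposite directions, and its d persuadable neighbours at distance 0.
  So the numerator of f_i vanishes and the quotient rule leaves only the derivative of the
  numerator divided by the total weight 2v + du. Differentiating the pull r \<mapsto> \<omega>(r) r gives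
  h(r) = \<omega>(r) (1 - 2\<gamma> r^2 (1 - \<omega>(r))), with h(0) = u and h(\<plusminus>1) = v (1 - 2\<gamma> (1 - v)); hence
  J_P = -(2 h(1) I + u L_P) / (2v + du). Being an affine function of L_P with negative slope,
  J_P has the eigenvectors of L_P, and the eigenvalue of J_P is nonnegative exactly when the
  corresponding eigenvalue of L_P is at most -2 h(1) / u.\<close>

lemma omega_pos: "omega \<gamma> \<delta> r > 0"
  unfolding omega_def by (simp add: add_pos_pos)

lemma omega_abs [simp]: "omega \<gamma> \<delta> \<bar>r\<bar> = omega \<gamma> \<delta> r"
  unfolding omega_def by simp

lemma omega_minus [simp]: "omega \<gamma> \<delta> (- r) = omega \<gamma> \<delta> r"
  unfolding omega_def by simp

lemma has_real_derivative_omega: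
  "(omega \<gamma> \<delta> has_real_derivative - 2 * \<gamma> * r * omega \<gamma> \<delta> r * (1 - omega \<gamma> \<delta> r)) (at r)"
proof -
  define e where "e = exp (\<gamma> * r\<^sup>2 - \<gamma> * \<delta>)"
  have "1 + e > 0" unfolding e_def by (smt (verit) exp_gt_zero)
  have "((\<lambda>r. 1 + exp (\<gamma> * r\<^sup>2 - \<gamma> * \<delta>)) has_real_derivative e * (2 * \<gamma> * r)) (at r)"
    unfolding e_def by (auto intro!: derivative_eq_intros)
  from DERIV_inverse'[OF this] \<open>1 + e > 0\<close>
  have "(omega \<gamma> \<delta> has_real_derivative - (inverse (1 + e) * (e * (2 * \<gamma> * r)) * inverse (1 + e))) (at r)"
    unfolding omega_def[abs_def] e_def by (simp add: inverse_eq_divide)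
  moreover have "- (inverse (1 + e) * (e * (2 * \<gamma> * r)) * inverse (1 + e)) =
      - 2 * \<gamma> * r * omega \<gamma> \<delta> r * (1 - omega \<gamma> \<delta> r)"
    unfolding omega_def e_def[symmetric] using \<open>1 + e > 0\<close> by (simp add: field_simps)
  ultimately show ?thesis by simp
qed

definition omega_drift_deriv :: "real \<Rightarrow> real \<Rightarrow> real \<Rightarrow> real" where
  "omega_drift_deriv \<gamma> \<delta> r = omega \<gamma> \<delta> r * (1 - 2 * \<gamma> * r\<^sup>2 * (1 - omega \<gamma> \<delta> r))"

lemma has_real_derivative_omega_drift:
  "((\<lambda>r. omega \<gamma> \<delta> r * r) has_real_derivative omega_drift_deriv \<gamma> \<delta> r) (at r)"
  using DERIV_mult[OF has_real_derivative_omega DERIV_ident]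
  unfolding omega_drift_deriv_def by (simp add: algebra_simps power2_eq_square)

lemma omega_drift_deriv_minus [simp]: "omega_drift_deriv \<gamma> \<delta> (- r) = omega_drift_deriv \<gamma> \<delta> r"
  unfolding omega_drift_deriv_def by simp

lemma omega_drift_deriv_0 [simp]: "omega_drift_deriv \<gamma> \<delta> 0 = omega \<gamma> \<delta> 0"
  unfolding omega_drift_deriv_def by simp

lemma has_real_derivative_sum_affine:
  fixes F F' :: "real \<Rightarrow> real" and p q :: "'k \<Rightarrow> real"
  assumes "\<And>r. (F has_real_derivative F' r) (at r)"
  shows "((\<lambda>t. \<Sum>k\<in>A. if S k then F (p k + t * q k) else 0) has_real_derivative
      (\<Sum>k\<in>A. if S k then F' (p k + t * q k) * q k else 0)) (at t)"
proof (rule DERIV_sum)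
  fix k
  have "((\<lambda>t. p k + t * q k) has_real_derivative q k) (at t)"
    by (auto intro!: derivative_eq_intros)
  from DERIV_chain2[OF assms this]
  show "((\<lambda>t. if S k then F (p k + t * q k) else 0) has_real_derivative
      (if S k then F' (p k + t * q k) * q k else 0)) (at t)" by simp
qed

lemma sum_if_mult_delta_diff:
  fixes g :: "'k::finite \<Rightarrow> real"
  shows "(\<Sum>k\<in>UNIV. if S k then g k * ((if k = j then 1 else 0) - (if i = j then 1 else 0)) else 0) =
    (if S j then g j else 0) - (if i = j then (\<Sum>k\<in>UNIV. if S k then g k else 0) else 0)"
proof -
  have "(if S k then g k * ((if k = j then 1 else 0) - (if i = j then 1 else 0)) else 0) =
      (if k = j then (if S j then g j else 0) else 0) - (if i = j then 1 else 0) * (if S k then g k else 0)"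
    for k by auto
  then show ?thesis by (simp add: sum_subtractf sum_distrib_left[symmetric])
qed

lemma sbcm_jac_at_balanced:
  fixes adj :: "'n::finite \<Rightarrow> 'n \<Rightarrow> bool" and x :: "real^'n"
  assumes "i \<notin> Z"
    and balanced: "(\<Sum>k\<in>UNIV. sbcm_w adj \<gamma> \<delta> x i k * (x$k - x$i)) = 0"
    and weight: "(\<Sum>k\<in>UNIV. sbcm_w adj \<gamma> \<delta> x i k) \<noteq> 0"
  shows "sbcm_jac adj Z \<gamma> \<delta> x i j =
    ((if adj i j then omega_drift_deriv \<gamma> \<delta> (x$j - x$i) else 0)
     - (if i = j then (\<Sum>k\<in>UNIV. if adj i k then omega_drift_deriv \<gamma> \<delta> (x$k - x$i) else 0) else 0))
    / (\<Sum>k\<in>UNIV. sbcm_w adj \<gamma> \<delta> x i k)"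
proof -
  define p where "p k = x$k - x$i" for k
  define q where "q k = (if k = j then 1 else 0) - (if i = j then 1 else 0 :: real)" for k
  define Num where
    "Num t = (\<Sum>k\<in>UNIV. if adj i k then omega \<gamma> \<delta> (p k + t * q k) * (p k + t * q k) else 0)" for t
  define Den where "Den t = (\<Sum>k\<in>UNIV. if adj i k then omega \<gamma> \<delta> (p k + t * q k) else 0)" for t
  have along_line: "sbcm_f adj Z \<gamma> \<delta> (x + t *\<^sub>R axis j 1) i = Num t / Den t" for t
  proof -
    have "(x + t *\<^sub>R axis j 1)$k - (x + t *\<^sub>R axis j 1)$i = p k + t * q k"
      and "(x + t *\<^sub>R axis j 1)$i - (x + t *\<^sub>R axis j 1)$k = - (p k + t * q k)" for k
      by (simp_all add: p_def q_def axis_def algebra_simps)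
    then show ?thesis
      using \<open>i \<notin> Z\<close> unfolding sbcm_f_def sbcm_w_def Num_def Den_def
      by (simp add: if_distrib[of "\<lambda>w. w * _"] del: minus_add_distrib cong: if_cong)
  qed
  have dNum: "(Num has_real_derivative
      (\<Sum>k\<in>UNIV. if adj i k then omega_drift_deriv \<gamma> \<delta> (p k) * q k else 0)) (at 0)"
    using has_real_derivative_sum_affine[OF has_real_derivative_omega_drift[of \<gamma> \<delta>],
        where A = UNIV and S = "adj i" and p = p and q = q and t = 0]
    unfolding Num_def by (simp only: mult_zero_left add_0_right)
  have dDen: "(Den has_real_derivative
      (\<Sum>k\<in>UNIV. if adj i k then - 2 * \<gamma> * p k * omega \<gamma> \<delta> (p k) * (1 - omega \<gamma> \<delta> (p k)) * q k else 0)) (at 0)"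
    using has_real_derivative_sum_affine[OF has_real_derivative_omega[of \<gamma> \<delta>],
        where A = UNIV and S = "adj i" and p = p and q = q and t = 0]
    unfolding Den_def by (simp only: mult_zero_left add_0_right)
  have "x$k - x$i = p k" "x$i - x$k = - p k" for k unfolding p_def by simp_all
  then have Num0: "Num 0 = 0" and Den0: "Den 0 = (\<Sum>k\<in>UNIV. sbcm_w adj \<gamma> \<delta> x i k)"
    using balanced unfolding Num_def Den_def sbcm_w_def
    by (simp_all add: if_distrib[of "\<lambda>w. w * _"] cong: if_cong)
  from DERIV_divide[OF dNum dDen] weight
  have "((\<lambda>t. Num t / Den t) has_real_derivative
      (\<Sum>k\<in>UNIV. if adj i k then omega_drift_deriv \<gamma> \<delta> (p k) * q k else 0) / (\<Sum>k\<in>UNIV. sbcm_w adj \<gamma> \<delta> x i k)) (at 0)"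
    unfolding Num0 Den0 by simp
  moreover have "(\<Sum>k\<in>UNIV. if adj i k then omega_drift_deriv \<gamma> \<delta> (p k) * q k else 0) =
      (if adj i j then omega_drift_deriv \<gamma> \<delta> (x$j - x$i) else 0)
      - (if i = j then (\<Sum>k\<in>UNIV. if adj i k then omega_drift_deriv \<gamma> \<delta> (x$k - x$i) else 0) else 0)"
    unfolding q_def p_def by (rule sum_if_mult_delta_diff)
  ultimately show ?thesis
    unfolding sbcm_jac_def along_line by (simp add: DERIV_imp_deriv)
qed

lemma is_eigvec_on_shift_scale:
  fixes M N :: "'n::finite \<Rightarrow> 'n \<Rightarrow> real"
  assumes M: "\<And>i j. i \<in> P \<Longrightarrow> j \<in> P \<Longrightarrow> M i j = a * (if i = j then 1 else 0) + b * N i j"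
    and "b \<noteq> 0"
  shows "is_eigvec_on P M \<mu> w \<longleftrightarrow> is_eigvec_on P N ((\<mu> - a) / b) w"
proof -
  have "(\<Sum>j\<in>P. M i j * w$j) = a * w$i + b * (\<Sum>j\<in>P. N i j * w$j)" if "i \<in> P" for i
  proof -
    have "(\<Sum>j\<in>P. M i j * w$j) = (\<Sum>j\<in>P. (if i = j then a * w$j else 0) + b * (N i j * w$j))"
      using M that by (intro sum.cong) (auto simp: algebra_simps)
    also have "\<dots> = a * w$i + b * (\<Sum>j\<in>P. N i j * w$j)"
      using that by (simp add: sum.distrib sum_distrib_left)
    finally show ?thesis .
  qed
  moreover have "a * c + b * S = \<mu> * c \<longleftrightarrow> S = (\<mu> - a) / b * c" for c S
    using \<open>b \<noteq> 0\<close> by (auto simp: field_simps)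
  ultimately show ?thesis unfolding is_eigvec_on_def by auto
qed

lemma nonneg_eigvecs_shift_scale:
  fixes M N :: "'n::finite \<Rightarrow> 'n \<Rightarrow> real"
  assumes M: "\<And>i j. i \<in> P \<Longrightarrow> j \<in> P \<Longrightarrow> M i j = a * (if i = j then 1 else 0) + b * N i j"
    and "b < 0"
  shows "{w. \<exists>\<mu>\<ge>0. is_eigvec_on P M \<mu> w} = {w. \<exists>lam\<le>- a / b. is_eigvec_on P N lam w}"
proof -
  have eig: "is_eigvec_on P M \<mu> w \<longleftrightarrow> is_eigvec_on P N ((\<mu> - a) / b) w" for \<mu> w
    using is_eigvec_on_shift_scale[OF M] \<open>b < 0\<close> by simp
  have "(\<exists>\<mu>\<ge>0. is_eigvec_on P N ((\<mu> - a) / b) w) \<longleftrightarrow> (\<exists>lam\<le>- a / b. is_eigvec_on P N lam w)" for w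
  proof
    assume "\<exists>\<mu>\<ge>0. is_eigvec_on P N ((\<mu> - a) / b) w"
    then obtain \<mu> where "\<mu> \<ge> 0" "is_eigvec_on P N ((\<mu> - a) / b) w" by blast
    moreover have "(\<mu> - a) / b \<le> - a / b"
      using divide_right_mono_neg[of "- a" "\<mu> - a" b] \<open>\<mu> \<ge> 0\<close> \<open>b < 0\<close> by simp
    ultimately show "\<exists>lam\<le>- a / b. is_eigvec_on P N lam w" by blast
  next
    assume "\<exists>lam\<le>- a / b. is_eigvec_on P N lam w"
    then obtain lam where "lam \<le> - a / b" "is_eigvec_on P N lam w" by blast
    moreover have "b * (- a / b) \<le> b * lam"
      using mult_left_mono_neg[of lam "- a / b" b] \<open>lam \<le> - a / b\<close> \<open>b < 0\<close> by simp
    then have "a + b * lam \<ge> 0" using \<open>b < 0\<close> by simp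
    moreover have "((a + b * lam) - a) / b = lam" using \<open>b < 0\<close> by simp
    ultimately show "\<exists>\<mu>\<ge>0. is_eigvec_on P N ((\<mu> - a) / b) w" by metis
  qed
  then show ?thesis unfolding eig by blast
qed

lemma sum_neighbours_two_zealots:
  fixes adj :: "'n::finite \<Rightarrow> 'n \<Rightarrow> bool" and F :: "'n \<Rightarrow> real"
  assumes "z1 \<noteq> z2" "adj i z1" "adj i z2" "card {k \<in> - {z1, z2}. adj i k} = d"
    and "\<And>k. k \<in> - {z1, z2} \<Longrightarrow> F k = c"
  shows "(\<Sum>k\<in>UNIV. if adj i k then F k else 0) = F z1 + F z2 + real d * c"
proof -
  have "UNIV = insert z1 (insert z2 (- {z1, z2}))" by auto
  then have "(\<Sum>k\<in>UNIV. if adj i k then F k else 0) =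
      (\<Sum>k\<in>insert z1 (insert z2 (- {z1, z2})). if adj i k then F k else 0)" by simp
  also have "\<dots> = F z1 + F z2 + (\<Sum>k\<in>- {z1, z2}. if adj i k then F k else 0)"
    using assms by simp
  also have "(\<Sum>k\<in>- {z1, z2}. if adj i k then F k else 0) = (\<Sum>k\<in>- {z1, z2}. if adj i k then c else 0)"
    using assms(5) by (intro sum.cong) auto
  also have "(\<Sum>k\<in>- {z1, z2}. if adj i k then c else 0) = real d * c"
    using assms(4) by (simp add: sum.inter_filter[symmetric])
  finally show ?thesis .
qed

lemma laplacian_on_regular:
  assumes "simple_graph adj" and "\<forall>i\<in>P. card {k\<in>P. adj i k} = d" and "i \<in> P"
  shows "laplacian_on adj P i j = real d * (if i = j then 1 else 0) - (if adj i j then 1 else 0)"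
  using assms unfolding simple_graph_def laplacian_on_def by auto

lemma sbcm_jac_two_zealots_harmonic:
  fixes adj :: "'n::finite \<Rightarrow> 'n \<Rightarrow> bool" and xbar :: "real^'n"
  assumes graph: "simple_graph adj"
    and "z1 \<noteq> z2"
    and adj_zealots: "\<forall>i\<in>- {z1, z2}. adj i z1 \<and> adj i z2"
    and regular: "\<forall>i\<in>- {z1, z2}. card {k\<in>- {z1, z2}. adj i k} = d"
    and xbar_def: "xbar = (\<chi> i. if i = z1 then -1 else if i = z2 then 1 else 0)"
    and i: "i \<in> - {z1, z2}" and j: "j \<in> - {z1, z2}"
  shows "sbcm_jac adj {z1, z2} \<gamma> \<delta> xbar i j =
      (- 2 * omega_drift_deriv \<gamma> \<delta> 1 / (2 * omega \<gamma> \<delta> 1 + real d * omega \<gamma> \<delta> 0))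
        * (if i = j then 1 else 0)
      + (- omega \<gamma> \<delta> 0 / (2 * omega \<gamma> \<delta> 1 + real d * omega \<gamma> \<delta> 0))
        * laplacian_on adj (- {z1, z2}) i j"
proof -
  define D where "D = 2 * omega \<gamma> \<delta> 1 + real d * omega \<gamma> \<delta> 0"
  have x: "xbar$z1 = -1" "xbar$z2 = 1" "\<And>k. k \<in> - {z1, z2} \<Longrightarrow> xbar$k = 0"
    using \<open>z1 \<noteq> z2\<close> unfolding xbar_def by auto
  have neighbours: "(\<Sum>k\<in>UNIV. if adj i k then F k else 0) = F z1 + F z2 + real d * c"
    if "\<And>k. k \<in> - {z1, z2} \<Longrightarrow> F k = c" for F :: "'n \<Rightarrow> real" and c
    by (rule sum_neighbours_two_zealots[OF \<open>z1 \<noteq> z2\<close>]) (use adj_zealots regular i that in auto)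
  have weight: "(\<Sum>k\<in>UNIV. sbcm_w adj \<gamma> \<delta> xbar i k) = D"
    using neighbours[of "\<lambda>k. omega \<gamma> \<delta> \<bar>xbar$i - xbar$k\<bar>" "omega \<gamma> \<delta> 0"] x i
    unfolding sbcm_w_def D_def by simp
  have balanced: "(\<Sum>k\<in>UNIV. sbcm_w adj \<gamma> \<delta> xbar i k * (xbar$k - xbar$i)) = 0"
    using neighbours[of "\<lambda>k. omega \<gamma> \<delta> \<bar>xbar$i - xbar$k\<bar> * (xbar$k - xbar$i)" 0] x i
    unfolding sbcm_w_def by (simp add: if_distrib[of "\<lambda>w. w * _"] cong: if_cong)
  have drift: "(\<Sum>k\<in>UNIV. if adj i k then omega_drift_deriv \<gamma> \<delta> (xbar$k - xbar$i) else 0)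
      = 2 * omega_drift_deriv \<gamma> \<delta> 1 + real d * omega \<gamma> \<delta> 0"
    using neighbours[of "\<lambda>k. omega_drift_deriv \<gamma> \<delta> (xbar$k - xbar$i)" "omega \<gamma> \<delta> 0"] x i
    by simp
  have "D > 0"
    unfolding D_def using omega_pos[of \<gamma> \<delta> 1] omega_pos[of \<gamma> \<delta> 0] by (simp add: add_pos_nonneg)
  with weight have "(\<Sum>k\<in>UNIV. sbcm_w adj \<gamma> \<delta> xbar i k) \<noteq> 0" by simp
  from sbcm_jac_at_balanced[where Z = "{z1, z2}" and j = j, OF _ balanced this] i
  have "sbcm_jac adj {z1, z2} \<gamma> \<delta> xbar i j =
    ((if adj i j then omega_drift_deriv \<gamma> \<delta> (xbar$j - xbar$i) else 0)
     - (if i = j then 2 * omega_drift_deriv \<gamma> \<delta> 1 + real d * omega \<gamma> \<delta> 0 else 0)) / D"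
    unfolding drift weight by simp
  moreover have "\<not> adj i i"
    using graph unfolding simple_graph_def by blast
  ultimately show ?thesis
    unfolding laplacian_on_regular[OF graph regular i] D_def[symmetric]
    using \<open>D > 0\<close> x i j by (cases "i = j") (auto simp: field_simps)
qed

theorem theorem7:
  fixes adj :: "'n::finite \<Rightarrow> 'n \<Rightarrow> bool" and z1 z2 :: 'n
    and \<gamma> \<delta> u v :: real and xbar :: "real^'n"
  assumes graph: "simple_graph adj"
    and zealots: "z1 \<noteq> z2"
    and regular: "\<exists>d. \<forall>i\<in>- {z1, z2}. card {k\<in>- {z1, z2}. adj i k} = d"
    and adj_zealots: "\<forall>i\<in>- {z1, z2}. adj i z1 \<and> adj i z2"
    and params: "\<gamma> \<ge> 0" "\<delta> \<ge> 0"
    and xbar_def: "xbar = (\<chi> i. if i = z1 then -1 else if i = z2 then 1 else 0)"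
    and u_def: "u = omega \<gamma> \<delta> 0"
    and v_def: "v = omega \<gamma> \<delta> 1"
  shows "unstable_space adj {z1, z2} \<gamma> \<delta> xbar =
         span {w. \<exists>lam. lam \<le> - (2 * v * (1 - 2 * \<gamma> * (1 - v))) / u
                     \<and> is_eigvec_on (- {z1, z2}) (laplacian_on adj (- {z1, z2})) lam w}"
proof -
  obtain d where reg: "\<forall>i\<in>- {z1, z2}. card {k\<in>- {z1, z2}. adj i k} = d"
    using regular by blast
  define D where "D = 2 * v + real d * u"
  have "u > 0" "D > 0"
    unfolding D_def u_def v_def using omega_pos[of \<gamma> \<delta> 1] omega_pos[of \<gamma> \<delta> 0]
    by (simp_all add: add_pos_nonneg)
  have "{w. \<exists>\<mu>\<ge>0. is_eigvec_on (- {z1, z2}) (sbcm_jac adj {z1, z2} \<gamma> \<delta> xbar) \<mu> w} =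
      {w. \<exists>lam\<le>- (- 2 * omega_drift_deriv \<gamma> \<delta> 1 / D) / (- u / D).
            is_eigvec_on (- {z1, z2}) (laplacian_on adj (- {z1, z2})) lam w}"
    using \<open>u > 0\<close> \<open>D > 0\<close>
    by (intro nonneg_eigvecs_shift_scale
        sbcm_jac_two_zealots_harmonic[where \<gamma> = \<gamma> and \<delta> = \<delta>,
          OF graph zealots adj_zealots reg xbar_def, folded u_def v_def, folded D_def]) simp_all
  moreover have "- (- 2 * omega_drift_deriv \<gamma> \<delta> 1 / D) / (- u / D) =
      - (2 * v * (1 - 2 * \<gamma> * (1 - v))) / u"
    using \<open>D > 0\<close> unfolding omega_drift_deriv_def v_def by simp
  ultimately show ?thesis
    unfolding unstable_space_def by (simp only:)
qed

end
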